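(* Let $U_0=\{[\xi_0,\ldots,\xi_m]\in\mathbb P^m:\xi_0\neq0\}$, identified with $\mathbb C^m$ via $w_j=\xi_j/\xi_0$. Let $U$ be a simply connected open neighborhood of $[1,0,\ldots,0]$ with $U\subset U_0$ and $\sum_{j=1}^m|\xi_j|^2<|\xi_0|^2$ for all $[\xi_0,\ldots,\xi_m]\in U$ (so $U$ is identified with an open neighborhood of $0$ in $\mathbb B^m$). Then for $1\le p\le m$ the function $$\Upsilon_p(w)=\frac{1}{(1+\|w\|^2)^{2p}}\det\big((1+\|w\|^2)\delta_{st}-\overline{w_s}w_t\big)_{1\le s,t\le p}$$ does not lie in $\Lambda(U)$.
   Context: For a complex manifold $X$, the Umehara algebra $\Lambda(X)$ is the associative algebra of real-analytic functions on $X$ consisting of real linear combinations of functions $f\bar g+g\bar f$ with $f,g$ holomorphic on $X$. *)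

theory Defs
  imports "HOL-Analysis.Analysis"
begin

definition holo_on :: "(complex ^ 'm) set \<Rightarrow> (complex ^ 'm \<Rightarrow> complex) \<Rightarrow> bool" where
  "holo_on U f \<longleftrightarrow>
     (\<forall>z\<in>U. \<exists>f'. (f has_derivative f') (at z) \<and> (\<forall>c v. f' (c *s v) = c * f' v))"

definition umehara :: "(complex ^ 'm) set \<Rightarrow> (complex ^ 'm \<Rightarrow> complex) set" where
  "umehara U = {h. \<exists>(k::nat) (c::nat \<Rightarrow> real) F G.
      (\<forall>i<k. holo_on U (F i) \<and> holo_on U (G i)) \<and>
      (\<forall>z\<in>U. h z = (\<Sum>i<k. complex_of_real (c i) *
                         (F i z * cnj (G i z) + G i z * cnj (F i z))))}"

definition det_nat :: "nat \<Rightarrow> (nat \<Rightarrow> nat \<Rightarrow> complex) \<Rightarrow> complex" where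
  "det_nat p M = (\<Sum>\<sigma> | \<sigma> permutes {1..p}. of_int (sign \<sigma>) * (\<Prod>s=1..p. M s (\<sigma> s)))"

text \<open>Upsilon_p, with coordinates w_j = w $ e j for an enumeration e of the index type.\<close>

definition Upsilon :: "(nat \<Rightarrow> 'm) \<Rightarrow> nat \<Rightarrow> complex ^ 'm \<Rightarrow> complex" where
  "Upsilon e p w =
     complex_of_real (1 / (1 + (norm w)^2) ^ (2*p)) *
     det_nat p (\<lambda>s t. complex_of_real ((1 + (norm w)^2) * (if s = t then 1 else 0))
                       - cnj (w $ e s) * (w $ e t))"

end

theory Submission
  imports Defs "HOL-Complex_Analysis.Complex_Analysis" "Jordan_Normal_Form.Determinant"
begin

(* On the complex line through the first coordinate vector, Upsilon_p is (1 + |t|^2)^-q with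
   q = p + 1, while an element of the Umehara algebra restricts to a finite sum of
   a_j(t) * conj (b_j(t)) with a_j, b_j holomorphic near 0.  By polarization, this identity
   survives replacing conj t by an independent variable v:
   sum_j a_j(u) * b'_j(v) = (1 + u v)^-q with b'_j holomorphic.  Differentiating n times in v
   at 0 gives sum_j a_j(u) * beta_nj = c_n u^n with c_n <> 0.  The N + 1 vectors
   beta_0, ..., beta_N in C^N satisfy a nontrivial linear relation, which turns into a nonzero
   polynomial vanishing on a disc. *)

lemma holomorphic_vanishing_on_connected_subset:
  assumes "f holomorphic_on S" "open S" "connected S"
    and "connected T" "T \<subseteq> S" "a \<in> T" "b \<in> T" "a \<noteq> b"
    and "\<And>z. z \<in> T \<Longrightarrow> f z = 0" "w \<in> S"
  shows "f w = 0"
proof (rule analytic_continuation[OF assms(1-3,5)])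
  show "a islimpt T"
    using assms(4,6-8) by (intro connected_imp_perfect) auto
qed (use assms in auto)

lemma unit_times_cnj_unit_factorization:
  fixes u v :: complex
  assumes "norm u = norm v"
  obtains l z where "norm l = 1" "norm z = norm u" "u = l * z" "v = cnj l * z"
proof (cases "u = 0")
  case True
  with assms show ?thesis by (intro that[of 1 0]) auto
next
  case False
  define z where "z = csqrt (u * v)"
  have zz: "z * z = u * v" unfolding z_def by (metis power2_csqrt power2_eq_square)
  have nz: "norm z = norm u"
    using assms by (simp add: z_def norm_mult real_sqrt_mult)
  with False have "z \<noteq> 0" by auto
  have "cnj (u / z) * z = cnj u * (z * z) / (cnj z * z)"
    using \<open>z \<noteq> 0\<close> by (simp add: field_simps)
  also have "cnj z * z = cnj u * u"
    using nz by (metis complex_norm_square mult.commute)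
  also have "cnj u * (z * z) / (cnj u * u) = v"
    using zz False by (simp add: field_simps)
  finally have "cnj (u / z) * z = v" .
  moreover have "norm (u / z) = 1" using nz False by (simp add: norm_divide)
  ultimately show ?thesis using \<open>z \<noteq> 0\<close> nz by (intro that[of "u / z" z]) auto
qed

lemma holomorphic_on_cnj_cnj_ball:
  assumes "f holomorphic_on ball 0 r"
  shows "(\<lambda>z. cnj (f (cnj z))) holomorphic_on ball 0 r"
proof -
  have "cnj ` ball 0 r = ball 0 r"
    unfolding image_cnj_conv_vimage_cnj by auto
  then have "cnj \<circ> f \<circ> cnj holomorphic_on ball 0 r"
    using assms by (intro holomorphic_on_compose_cnj_cnj) auto
  then show ?thesis by (simp add: o_def)
qed

lemma holomorphic_on_rotate_ball:
  assumes "f holomorphic_on ball 0 r" "norm l = 1"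
  shows "(\<lambda>z. f (l * z)) holomorphic_on ball 0 r"
proof (rule holomorphic_on_compose_gen[of "(*) l" _ f "ball 0 r", unfolded o_def])
  show "(*) l ` ball 0 r \<subseteq> ball 0 r"
    using assms(2) by (auto simp: norm_mult)
qed (use assms(1) in \<open>auto intro: holomorphic_intros\<close>)

lemma holomorphic_on_square_ball:
  assumes "g holomorphic_on ball 0 (r\<^sup>2)"
  shows "(\<lambda>z. g (z * z)) holomorphic_on ball 0 r"
proof (rule holomorphic_on_compose_gen[of "\<lambda>z. z * z" _ g "ball 0 (r\<^sup>2)", unfolded o_def])
  have "norm (z * z) < r\<^sup>2" if "norm z < r" for z :: complex
    using that by (simp add: norm_mult power2_eq_square mult_strict_mono')
  then show "(\<lambda>z::complex. z * z) ` ball 0 r \<subseteq> ball 0 (r\<^sup>2)" by auto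
qed (use assms in \<open>auto intro: holomorphic_intros\<close>)

(* With u = l z and v = conj l z, both sides are holomorphic in z and agree for real z. *)
lemma polarization_on_equal_norms:
  fixes a b :: "nat \<Rightarrow> complex \<Rightarrow> complex" and g :: "complex \<Rightarrow> complex"
  assumes a: "\<And>j. j < N \<Longrightarrow> a j holomorphic_on ball 0 r"
    and b: "\<And>j. j < N \<Longrightarrow> b j holomorphic_on ball 0 r"
    and g: "g holomorphic_on ball 0 (r\<^sup>2)"
    and diag: "\<And>t. t \<in> ball 0 r \<Longrightarrow> (\<Sum>j<N. a j t * cnj (b j t)) = g (t * cnj t)"
    and uv: "norm u = norm v" "norm u < r"
  shows "(\<Sum>j<N. a j u * cnj (b j (cnj v))) = g (u * v)"
proof -
  obtain l z where l: "norm l = 1" and z: "norm z = norm u" and u: "u = l * z" and v: "v = cnj l * z"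
    using unit_times_cnj_unit_factorization[OF uv(1)] .
  have "l * cnj l = 1"
    using l by (metis complex_norm_square mult.commute norm_one of_real_1 power_one)
  then have lz: "(l * \<zeta>) * (cnj l * \<zeta>) = \<zeta> * \<zeta>" for \<zeta>
    by (metis mult.assoc mult.left_commute mult_1)
  define f where "f \<zeta> = (\<Sum>j<N. a j (l * \<zeta>) * cnj (b j (cnj (cnj l * \<zeta>)))) - g (\<zeta> * \<zeta>)" for \<zeta>
  have "(\<lambda>\<zeta>. a j (l * \<zeta>)) holomorphic_on ball 0 r" if "j < N" for j
    using a[OF that] l by (rule holomorphic_on_rotate_ball)
  moreover have "(\<lambda>\<zeta>. cnj (b j (cnj (cnj l * \<zeta>)))) holomorphic_on ball 0 r" if "j < N" for j
    using holomorphic_on_rotate_ball[OF holomorphic_on_cnj_cnj_ball[OF b[OF that]], of "cnj l"] l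
    by simp
  ultimately have hf: "f holomorphic_on ball 0 r"
    unfolding f_def using holomorphic_on_square_ball[OF g]
    by (intro holomorphic_intros holomorphic_on_sum) auto
  have real: "f x = 0" if "x \<in> ball 0 r \<inter> \<real>" for x
  proof -
    have "cnj x = x" using that by (simp add: Reals_cnj_iff)
    then show ?thesis using diag[of "l * x"] that l lz[of x] by (simp add: f_def norm_mult)
  qed
  have conn: "connected (ball (0::complex) r \<inter> \<real>)"
    by (intro convex_connected convex_Int convex_ball convex_Reals)
  have "0 < r" using uv(2) norm_ge_zero[of u] by linarith
  have "f z = 0"
    by (rule holomorphic_vanishing_on_connected_subset[OF hf open_ball connected_ball conn,
          where a = 0 and b = "of_real (r / 2)"])
       (use real \<open>0 < r\<close> z uv(2) in auto)
  then show ?thesis unfolding f_def u v lz by simp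
qed

lemma polarization_holomorphic:
  fixes a b :: "nat \<Rightarrow> complex \<Rightarrow> complex" and g :: "complex \<Rightarrow> complex"
  assumes a: "\<And>j. j < N \<Longrightarrow> a j holomorphic_on ball 0 r"
    and b: "\<And>j. j < N \<Longrightarrow> b j holomorphic_on ball 0 r"
    and g: "g holomorphic_on ball 0 (r\<^sup>2)"
    and diag: "\<And>t. t \<in> ball 0 r \<Longrightarrow> (\<Sum>j<N. a j t * cnj (b j t)) = g (t * cnj t)"
    and u: "u \<in> ball 0 r" and v: "v \<in> ball 0 r"
  shows "(\<Sum>j<N. a j u * cnj (b j (cnj v))) = g (u * v)"
proof -
  define K where "K u v = (\<Sum>j<N. a j u * cnj (b j (cnj v))) - g (u * v)" for u v
  have prod_in_ball: "u * v \<in> ball 0 (r\<^sup>2)" if "u \<in> ball 0 r" "v \<in> ball 0 r" for u v :: complex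
    using that by (simp add: norm_mult power2_eq_square mult_strict_mono')
  have hol_g: "(\<lambda>w. g (u * w)) holomorphic_on ball 0 r" if "u \<in> ball 0 r" for u
    using prod_in_ball[OF that] g
    by (intro holomorphic_on_compose_gen[of "(*) u" _ g "ball 0 (r\<^sup>2)", unfolded o_def])
       (auto intro: holomorphic_intros)
  have hol_v: "K u holomorphic_on ball 0 r" if "u \<in> ball 0 r" for u
    unfolding K_def using hol_g[OF that] holomorphic_on_cnj_cnj_ball[OF b]
    by (intro holomorphic_intros holomorphic_on_sum) auto
  have hol_u: "(\<lambda>u. K u v) holomorphic_on ball 0 r" if "v \<in> ball 0 r" for v
    unfolding K_def using hol_g[OF that] a by (intro holomorphic_intros holomorphic_on_sum) (auto simp: mult.commute)
  have equal_norms: "K u v = 0" if "norm u = norm v" "norm u < r" for u v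
    using polarization_on_equal_norms[OF a b g diag that] by (simp add: K_def)
  have sphere: "connected (sphere (0::complex) \<rho>)" for \<rho>
    by (rule connected_sphere) simp
  (* Continue in v from the circle |v| = |u|, and then in u from the circle |u| = r/2. *)
  have off_zero: "K u v = 0" if "u \<noteq> 0" "u \<in> ball 0 r" "v \<in> ball 0 r" for u v
    by (rule holomorphic_vanishing_on_connected_subset[OF hol_v open_ball connected_ball
          sphere[of "norm u"], where a = u and b = "- u"])
       (use that equal_norms in auto)
  show ?thesis
  proof (cases "u = 0")
    case True
    have "0 < r" using u norm_ge_zero[of u] unfolding mem_ball_0 by linarith
    have "K u v = 0"
      by (rule holomorphic_vanishing_on_connected_subset[OF hol_u[OF v] open_ball connected_ball
          sphere[of "r / 2"], where a = "of_real (r / 2)" and b = "- of_real (r / 2)"])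
         (use \<open>0 < r\<close> u v off_zero in auto)
    then show ?thesis by (simp add: K_def)
  next
    case False
    then show ?thesis using off_zero[OF False u v] by (simp add: K_def)
  qed
qed

lemma has_field_derivative_inverse_power:
  fixes u v :: complex
  assumes "1 + u * v \<noteq> 0"
  shows "((\<lambda>w. inverse ((1 + u * w) ^ k)) has_field_derivative
           - of_nat k * u * inverse ((1 + u * v) ^ Suc k)) (at v)"
proof -
  have "((\<lambda>w. (1 + u * w) ^ k) has_field_derivative of_nat k * (1 + u * v) ^ (k - 1) * u) (at v)"
    by (auto intro!: derivative_eq_intros)
  then have d: "((\<lambda>w. inverse ((1 + u * w) ^ k)) has_field_derivative
      - (inverse ((1 + u * v) ^ k) * (of_nat k * (1 + u * v) ^ (k - 1) * u) * inverse ((1 + u * v) ^ k))) (at v)"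
    by (rule DERIV_inverse') (use assms in \<open>simp add: power_not_zero\<close>)
  have alg: "- (inverse (y ^ k) * (of_nat k * y ^ (k - 1) * u) * inverse (y ^ k))
      = - of_nat k * u * inverse (y ^ Suc k)" if "y \<noteq> 0" for y :: complex
    using that by (cases k) (simp_all add: field_simps)
  show ?thesis using d unfolding alg[OF assms] .
qed

lemma higher_deriv_inverse_power:
  fixes u v :: complex
  assumes "1 + u * v \<noteq> 0"
  shows "(deriv ^^ n) (\<lambda>v. inverse ((1 + u * v) ^ q)) v
       = (\<Prod>i<n. - of_nat (q + i)) * u ^ n * inverse ((1 + u * v) ^ (q + n))"
proof -
  define S where "S = {v. 1 + u * v \<noteq> 0}"
  have "open S" unfolding S_def by (intro open_Collect_neq continuous_intros)
  have "v \<in> S" using assms by (simp add: S_def)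
  then show ?thesis
  proof (induction n arbitrary: v)
    case (Suc n v)
    define C where "C = (\<Prod>i<n. - of_nat (q + i)) * u ^ n"
    have "\<forall>\<^sub>F w in nhds v. (deriv ^^ n) (\<lambda>v. inverse ((1 + u * v) ^ q)) w
                             = C * inverse ((1 + u * w) ^ (q + n))"
      using eventually_nhds_in_open[OF \<open>open S\<close> Suc.prems]
      by eventually_elim (simp add: Suc.IH C_def)
    then have "deriv ((deriv ^^ n) (\<lambda>v. inverse ((1 + u * v) ^ q))) v
             = deriv (\<lambda>w. C * inverse ((1 + u * w) ^ (q + n))) v"
      by (rule deriv_cong_ev) simp
    also have "\<dots> = C * (- of_nat (q + n) * u * inverse ((1 + u * v) ^ Suc (q + n)))"
      using Suc.prems
      by (intro DERIV_imp_deriv DERIV_cmult has_field_derivative_inverse_power) (simp add: S_def)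
    finally show ?case by (simp add: C_def)
  qed simp
qed

lemma higher_deriv_sum:
  fixes f :: "'i \<Rightarrow> complex \<Rightarrow> complex"
  assumes "finite I" "\<And>i. i \<in> I \<Longrightarrow> f i holomorphic_on S" "open S" "z \<in> S"
  shows "(deriv ^^ n) (\<lambda>w. \<Sum>i\<in>I. f i w) z = (\<Sum>i\<in>I. (deriv ^^ n) (f i) z)"
  using assms(1,2)
proof (induction I rule: finite_induct)
  case (insert i I)
  then have "(deriv ^^ n) (\<lambda>w. f i w + (\<Sum>i\<in>I. f i w)) z
           = (deriv ^^ n) (f i) z + (deriv ^^ n) (\<lambda>w. \<Sum>i\<in>I. f i w) z"
    using assms(3,4) by (intro higher_deriv_add) (auto intro!: holomorphic_on_sum)
  with insert show ?case by simp
qed simp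

(* A kernel vector of the square matrix obtained by adding a zero row j = N. *)
lemma exists_nontrivial_linear_relation:
  fixes \<beta> :: "nat \<Rightarrow> nat \<Rightarrow> 'a::idom"
  obtains d where "\<exists>n\<le>N. d n \<noteq> 0" "\<And>j. j < N \<Longrightarrow> (\<Sum>n\<le>N. d n * \<beta> n j) = 0"
proof -
  define B :: "'a mat" where "B = Matrix.mat (Suc N) (Suc N) (\<lambda>(j, n). if j < N then \<beta> n j else 0)"
  have B: "B \<in> carrier_mat (Suc N) (Suc N)" by (simp add: B_def)
  have "transpose_mat B *\<^sub>v unit_vec (Suc N) N = 0\<^sub>v (Suc N)"
    by (auto simp: B_def scalar_prod_def unit_vec_def)
  then have "det (transpose_mat B) = 0"
    using det_0_iff_vec_prod_zero[of "transpose_mat B" "Suc N"] B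
    by (metis carrier_matD(1) carrier_matD(2) index_unit_vec(3) transpose_carrier_mat unit_vec_carrier unit_vec_nonzero lessI)
  then have "det B = 0" using B by (simp add: det_transpose)
  then obtain x where x: "x \<in> carrier_vec (Suc N)" "x \<noteq> 0\<^sub>v (Suc N)" "B *\<^sub>v x = 0\<^sub>v (Suc N)"
    using det_0_iff_vec_prod_zero[OF B] by blast
  show ?thesis
  proof (rule that[of "\<lambda>n. x $ n"])
    show "\<exists>n\<le>N. x $ n \<noteq> 0"
      using x(1,2) by (metis eq_vecI carrier_vecD index_zero_vec less_Suc_eq_le)
    show "(\<Sum>n\<le>N. x $ n * \<beta> n j) = 0" if "j < N" for j
    proof -
      have "(B *\<^sub>v x) $ j = 0" using x(3) that by simp
      then show ?thesis using that x(1)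
        by (auto simp: B_def scalar_prod_def mult.commute atLeast0LessThan lessThan_Suc_atMost)
    qed
  qed
qed

lemma higher_deriv_0_of_inverse_power_kernel:
  fixes \<alpha> :: "nat \<Rightarrow> complex" and b :: "nat \<Rightarrow> complex \<Rightarrow> complex"
  assumes r: "0 < r" "r \<le> 1" and u: "norm u \<le> 1"
    and b: "\<And>j. j < N \<Longrightarrow> b j holomorphic_on ball 0 r"
    and kernel: "\<And>v. v \<in> ball 0 r \<Longrightarrow> (\<Sum>j<N. \<alpha> j * b j v) = inverse ((1 + u * v) ^ q)"
  shows "(\<Sum>j<N. \<alpha> j * (deriv ^^ n) (b j) 0) = (\<Prod>i<n. - of_nat (q + i)) * u ^ n"
proof -
  have "0 \<in> ball (0::complex) r" using r by simp
  have "1 + u * v \<noteq> 0" if "v \<in> ball 0 r" for v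
  proof -
    have "norm u * norm v \<le> norm v" using u by (intro mult_left_le_one_le) auto
    then have "norm (u * v) < 1" using that r by (simp add: norm_mult)
    then show ?thesis by (auto simp: add_eq_0_iff)
  qed
  then have "(\<lambda>v. inverse ((1 + u * v) ^ q)) holomorphic_on ball 0 r"
    by (auto intro!: holomorphic_intros)
  have "(\<Sum>j<N. \<alpha> j * (deriv ^^ n) (b j) 0) = (\<Sum>j<N. (deriv ^^ n) (\<lambda>v. \<alpha> j * b j v) 0)"
    using higher_deriv_cmult[OF b _ open_ball] \<open>0 \<in> ball 0 r\<close> by (intro sum.cong) auto
  also have "\<dots> = (deriv ^^ n) (\<lambda>v. \<Sum>j<N. \<alpha> j * b j v) 0"
    using b \<open>0 \<in> ball 0 r\<close>
    by (intro higher_deriv_sum[symmetric, OF _ _ open_ball]) (auto intro!: holomorphic_intros)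
  also have "\<dots> = (deriv ^^ n) (\<lambda>v. inverse ((1 + u * v) ^ q)) 0"
    using b kernel \<open>0 \<in> ball 0 r\<close> \<open>(\<lambda>v. inverse ((1 + u * v) ^ q)) holomorphic_on ball 0 r\<close>
    by (intro higher_deriv_transform_within_open[OF _ _ open_ball])
       (auto intro!: holomorphic_intros holomorphic_on_sum)
  also have "\<dots> = (\<Prod>i<n. - of_nat (q + i)) * u ^ n"
    by (simp add: higher_deriv_inverse_power)
  finally show ?thesis .
qed

lemma inverse_power_kernel_not_finite_rank:
  fixes a b :: "nat \<Rightarrow> complex \<Rightarrow> complex"
  assumes r: "0 < r" "r \<le> 1" and q: "1 \<le> q"
    and b: "\<And>j. j < N \<Longrightarrow> b j holomorphic_on ball 0 r"
    and kernel: "\<And>u v. u \<in> ball 0 r \<Longrightarrow> v \<in> ball 0 r \<Longrightarrow>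
                   (\<Sum>j<N. a j u * b j v) = inverse ((1 + u * v) ^ q)"
  shows False
proof -
  define c where "c n = (\<Prod>i<n. - of_nat (q + i) :: complex)" for n
  have "c n \<noteq> 0" for n
    unfolding c_def prod_zero_iff[OF finite_lessThan] using q
    by (simp only: neg_equal_0_iff_equal of_nat_eq_0_iff) simp
  define \<beta> where "\<beta> n j = (deriv ^^ n) (b j) 0" for n j
  obtain d where d: "\<exists>n\<le>N. d n \<noteq> 0" "\<And>j. j < N \<Longrightarrow> (\<Sum>n\<le>N. d n * \<beta> n j) = 0"
    using exists_nontrivial_linear_relation[of N \<beta>] by blast
  have "(\<Sum>n\<le>N. (d n * c n) * u ^ n) = 0" if u: "u \<in> ball 0 r" for u
  proof -
    have "c n * u ^ n = (\<Sum>j<N. a j u * \<beta> n j)" for n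
      using higher_deriv_0_of_inverse_power_kernel[OF r _ b kernel[OF u]] u r
      by (simp add: c_def \<beta>_def)
    then have "(\<Sum>n\<le>N. (d n * c n) * u ^ n) = (\<Sum>n\<le>N. d n * (\<Sum>j<N. a j u * \<beta> n j))"
      by (simp add: mult.assoc)
    also have "\<dots> = (\<Sum>j<N. a j u * (\<Sum>n\<le>N. d n * \<beta> n j))"
      by (simp add: sum_distrib_left sum.swap[of _ "{..N}"] mult.assoc mult.left_commute)
    also have "\<dots> = 0" using d(2) by simp
    finally show ?thesis .
  qed
  then have "ball 0 r \<subseteq> {u. (\<Sum>n\<le>N. (d n * c n) * u ^ n) = 0}" by blast
  moreover have "infinite (ball (0::complex) r)"
    using r finite_imp_not_open by fastforce
  ultimately have "\<forall>n\<le>N. d n * c n = 0"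
    using polyfun_finite_roots[of "\<lambda>n. d n * c n" N] finite_subset by blast
  then show False using d(1) \<open>\<And>n. c n \<noteq> 0\<close> by auto
qed

lemma inverse_power_not_sum_mult_cnj:
  fixes a b :: "nat \<Rightarrow> complex \<Rightarrow> complex"
  assumes "0 < r" "1 \<le> q"
    and a: "\<And>j. j < N \<Longrightarrow> a j holomorphic_on ball 0 r"
    and b: "\<And>j. j < N \<Longrightarrow> b j holomorphic_on ball 0 r"
    and diag: "\<And>t. t \<in> ball 0 r \<Longrightarrow> (\<Sum>j<N. a j t * cnj (b j t)) = inverse ((1 + t * cnj t) ^ q)"
  shows False
proof -
  define \<rho> where "\<rho> = min r 1"
  have \<rho>: "0 < \<rho>" "\<rho> \<le> 1" and "\<rho> \<le> r"
    using \<open>0 < r\<close> by (auto simp: \<rho>_def)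
  have a\<rho>: "a j holomorphic_on ball 0 \<rho>" and b\<rho>: "b j holomorphic_on ball 0 \<rho>" if "j < N" for j
    using a[OF that] b[OF that] holomorphic_on_subset subset_ball[OF \<open>\<rho> \<le> r\<close>] by blast+
  have g: "(\<lambda>w. inverse ((1 + w) ^ q)) holomorphic_on ball 0 (\<rho>\<^sup>2)"
  proof (intro holomorphic_intros)
    fix w :: complex assume "w \<in> ball 0 (\<rho>\<^sup>2)"
    moreover have "\<rho>\<^sup>2 \<le> 1" using \<rho> by (simp add: power_le_one)
    ultimately show "(1 + w) ^ q \<noteq> 0" by (auto simp: add_eq_0_iff)
  qed
  have kernel: "(\<Sum>j<N. a j u * cnj (b j (cnj v))) = inverse ((1 + u * v) ^ q)"
    if "u \<in> ball 0 \<rho>" "v \<in> ball 0 \<rho>" for u v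
    using diag \<open>\<rho> \<le> r\<close> by (intro polarization_holomorphic[OF a\<rho> b\<rho> g _ that]) auto
  show False
    by (rule inverse_power_kernel_not_finite_rank[OF \<rho> \<open>1 \<le> q\<close> holomorphic_on_cnj_cnj_ball[OF b\<rho>] kernel])
qed

lemma holo_on_cmult:
  assumes "holo_on U F"
  shows "holo_on U (\<lambda>z. c * F z)"
  unfolding holo_on_def
proof
  fix z assume "z \<in> U"
  then obtain F' where "(F has_derivative F') (at z)" "\<forall>c v. F' (c *s v) = c * F' v"
    using assms unfolding holo_on_def by blast
  then show "\<exists>f'. ((\<lambda>z. c * F z) has_derivative f') (at z) \<and> (\<forall>a v. f' (a *s v) = a * f' v)"
    by (intro exI[of _ "\<lambda>v. c * F' v"]) (auto intro: has_derivative_mult_right simp: mult.left_commute)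
qed

lemma sum_lessThan_double_in_pairs: "(\<Sum>j<2 * (k::nat). f j) = (\<Sum>i<k. f (2 * i) + f (2 * i + 1))"
  by (induction k) (simp_all add: algebra_simps)

lemma umehara_imp_sum_mult_cnj:
  assumes "h \<in> umehara U"
  obtains N :: nat and a b where "\<And>j. j < N \<Longrightarrow> holo_on U (a j)" "\<And>j. j < N \<Longrightarrow> holo_on U (b j)"
    "\<And>z. z \<in> U \<Longrightarrow> h z = (\<Sum>j<N. a j z * cnj (b j z))"
proof -
  obtain k :: nat and c F G where FG: "\<forall>i<k. holo_on U (F i) \<and> holo_on U (G i)"
    and h: "\<forall>z\<in>U. h z = (\<Sum>i<k. complex_of_real (c i) * (F i z * cnj (G i z) + G i z * cnj (F i z)))"
    using assms unfolding umehara_def mem_Collect_eq by blast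
  define a where "a j = (\<lambda>z. complex_of_real (c (j div 2)) * (if even j then F else G) (j div 2) z)" for j
  define b where "b j = (if even j then G else F) (j div 2)" for j
  show ?thesis
  proof (rule that[of "2 * k" a b])
    show "holo_on U (a j)" "holo_on U (b j)" if "j < 2 * k" for j
      using FG that by (auto simp: a_def b_def intro: holo_on_cmult)
    show "h z = (\<Sum>j<2 * k. a j z * cnj (b j z))" if "z \<in> U" for z
      using h that unfolding sum_lessThan_double_in_pairs by (simp add: a_def b_def algebra_simps)
  qed
qed

lemma norm_axis_eq: "norm (axis i (t::complex) :: complex ^ 'm::finite) = norm t"
  by (simp add: norm_eq_sqrt_inner inner_axis_axis)

lemma holo_on_imp_holomorphic_on_axis:
  fixes F :: "complex ^ 'm::finite \<Rightarrow> complex"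
  assumes F: "holo_on U F" and B: "open B" "\<And>t. t \<in> B \<Longrightarrow> axis i t \<in> U"
  shows "(\<lambda>t. F (axis i t)) holomorphic_on B"
proof -
  have lin: "bounded_linear (axis i :: complex \<Rightarrow> complex ^ 'm)"
    by (intro linear_conv_bounded_linear[THEN iffD1] linearI)
       (simp_all add: axis_def Finite_Cartesian_Product.vec_eq_iff)
  have "(\<lambda>t. F (axis i t)) field_differentiable at x" if x: "x \<in> B" for x
  proof -
    obtain F' where F': "(F has_derivative F') (at (axis i x))" "\<forall>c v. F' (c *s v) = c * F' v"
      using F B x unfolding holo_on_def by blast
    have "((\<lambda>t. F (axis i t)) has_derivative (\<lambda>h. F' (axis i h))) (at x)"
      by (rule has_derivative_compose[OF bounded_linear_imp_has_derivative[OF lin] F'(1)])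
    moreover have "(\<lambda>h. F' (axis i h)) = (*) (F' (axis i 1))"
    proof
      fix h :: complex
      have "axis i h = h *s (axis i 1 :: complex ^ 'm)"
        by (simp add: axis_def Finite_Cartesian_Product.vec_eq_iff)
      then show "F' (axis i h) = F' (axis i 1) * h" using F'(2) by (simp add: mult.commute)
    qed
    ultimately show ?thesis unfolding field_differentiable_def has_field_derivative_def by auto
  qed
  then show ?thesis using B(1) by (simp add: holomorphic_on_open field_differentiable_def)
qed

lemma det_nat_diagonal:
  assumes "\<And>s t. s \<in> {1..p} \<Longrightarrow> t \<in> {1..p} \<Longrightarrow> s \<noteq> t \<Longrightarrow> M s t = 0"
  shows "det_nat p M = (\<Prod>s=1..p. M s s)"
proof -
  let ?P = "{\<sigma>. \<sigma> permutes {1..p}}"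
  have vanish: "of_int (sign \<sigma>) * (\<Prod>s=1..p. M s (\<sigma> s)) = 0" if "\<sigma> \<in> ?P - {id}" for \<sigma>
  proof -
    from that have \<sigma>: "\<sigma> permutes {1..p}" and "\<sigma> \<noteq> id" by auto
    then obtain s where s: "\<sigma> s \<noteq> s" by (metis eq_id_iff)
    then have "s \<in> {1..p}" using \<sigma> by (meson permutes_not_in)
    moreover have "\<sigma> s \<in> {1..p}" using calculation permutes_in_image[OF \<sigma>] by blast
    ultimately have "M s (\<sigma> s) = 0" using s by (intro assms) auto
    then have "(\<Prod>s=1..p. M s (\<sigma> s)) = 0" using \<open>s \<in> {1..p}\<close> by (intro prod_zero) auto
    then show ?thesis by simp
  qed
  have "det_nat p M = of_int (sign (id :: nat \<Rightarrow> nat)) * (\<Prod>s=1..p. M s (id s))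
      + (\<Sum>\<sigma>\<in>?P - {id}. of_int (sign \<sigma>) * (\<Prod>s=1..p. M s (\<sigma> s)))"
    unfolding det_nat_def by (rule sum.remove) (simp_all add: finite_permutations permutes_id)
  also have "(\<Sum>\<sigma>\<in>?P - {id}. of_int (sign \<sigma>) * (\<Prod>s=1..p. M s (\<sigma> s))) = 0"
    using vanish by (intro sum.neutral) blast
  finally show ?thesis by (simp add: sign_id)
qed

lemma Upsilon_axis:
  fixes e :: "nat \<Rightarrow> 'm::finite" and t :: complex
  assumes e: "bij_betw e {1..CARD('m)} UNIV" and p: "1 \<le> p" "p \<le> CARD('m)"
  shows "Upsilon e p (axis (e 1) t :: complex ^ 'm) = inverse ((1 + t * cnj t) ^ (p + 1))"
proof -
  define w where "w = (axis (e 1) t :: complex ^ 'm)"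
  define R where "R = 1 + (norm t)\<^sup>2"
  have "R > 0" by (simp add: R_def add_pos_nonneg)
  have "norm w = norm t" by (simp add: w_def norm_axis_eq)
  have w: "w $ e s = (if s = 1 then t else 0)" if "s \<in> {1..p}" for s
  proof -
    have "e s = e 1 \<longleftrightarrow> s = 1"
      using e that p by (auto simp: bij_betw_def dest: inj_onD)
    then show ?thesis by (simp add: w_def axis_def)
  qed
  have t_cnj_t: "t * cnj t = complex_of_real ((norm t)\<^sup>2)" by (rule complex_norm_square[symmetric])
  then have "1 + t * cnj t = complex_of_real R" by (simp add: R_def)
  define M where "M s s' = complex_of_real ((1 + (norm w)\<^sup>2) * (if s = s' then 1 else 0))
                           - cnj (w $ e s) * (w $ e s')" for s s'
  have "det_nat p M = (\<Prod>s=1..p. M s s)"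
    using w by (intro det_nat_diagonal) (auto simp: M_def)
  also have "\<dots> = M 1 1 * (\<Prod>s=2..p. M s s)"
    using p by (simp add: prod.atLeast_Suc_atMost numeral_2_eq_2)
  also have "(\<Prod>s=2..p. M s s) = (\<Prod>s=2..p. complex_of_real R)"
    using w \<open>norm w = norm t\<close> by (intro prod.cong) (auto simp: M_def R_def)
  also have "M 1 1 = 1"
    using w[of 1] p \<open>norm w = norm t\<close> by (simp add: M_def t_cnj_t mult.commute)
  finally have det: "det_nat p M = complex_of_real (R ^ (p - 1))" by simp
  have "2 * p = (p - 1) + (p + 1)" using p by simp
  then have pow: "R ^ (2 * p) = R ^ (p - 1) * R ^ (p + 1)" by (metis power_add)
  have "1 / R ^ (2 * p) * R ^ (p - 1) = 1 / R ^ (p + 1)"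
    unfolding pow using \<open>R > 0\<close> by simp
  moreover have "Upsilon e p w = complex_of_real (1 / R ^ (2 * p)) * det_nat p M"
    unfolding Upsilon_def M_def R_def \<open>norm w = norm t\<close> ..
  ultimately have "Upsilon e p w = complex_of_real (1 / R ^ (p + 1))"
    unfolding det of_real_mult[symmetric] by simp
  also have "\<dots> = inverse ((1 + t * cnj t) ^ (p + 1))"
    unfolding \<open>1 + t * cnj t = complex_of_real R\<close> by (simp add: divide_inverse)
  finally show ?thesis by (simp add: w_def)
qed

theorem lemma3p6:
  fixes U :: "(complex ^ 'm) set" and e :: "nat \<Rightarrow> 'm" and p :: nat
  assumes "bij_betw e {1..CARD('m)} UNIV"
    and "open U" and "simply_connected U" and "0 \<in> U"
    and "\<forall>w\<in>U. norm w < 1"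
    and "1 \<le> p" and "p \<le> CARD('m)"
  shows "Upsilon e p \<notin> umehara U"
proof
  assume "Upsilon e p \<in> umehara U"
  then obtain N :: nat and a b where a: "\<And>j. j < N \<Longrightarrow> holo_on U (a j)" and b: "\<And>j. j < N \<Longrightarrow> holo_on U (b j)"
    and Upsilon: "\<And>z. z \<in> U \<Longrightarrow> Upsilon e p z = (\<Sum>j<N. a j z * cnj (b j z))"
    by (rule umehara_imp_sum_mult_cnj) blast
  obtain r where "r > 0" "ball 0 r \<subseteq> U" using assms(2,4) open_contains_ball by blast
  then have line: "axis (e 1) t \<in> U" if "t \<in> ball 0 r" for t
    using that by (auto simp: norm_axis_eq)
  show False
  proof (rule inverse_power_not_sum_mult_cnj[OF \<open>r > 0\<close>, where q = "p + 1"])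
    fix j assume "j < N"
    show "(\<lambda>t. a j (axis (e 1) t)) holomorphic_on ball 0 r" "(\<lambda>t. b j (axis (e 1) t)) holomorphic_on ball 0 r"
      using a[OF \<open>j < N\<close>] b[OF \<open>j < N\<close>] line by (auto intro!: holo_on_imp_holomorphic_on_axis)
  next
    fix t :: complex assume "t \<in> ball 0 r"
    show "(\<Sum>j<N. a j (axis (e 1) t) * cnj (b j (axis (e 1) t))) = inverse ((1 + t * cnj t) ^ (p + 1))"
      using Upsilon[OF line[OF \<open>t \<in> ball 0 r\<close>]] Upsilon_axis[OF assms(1,6,7), of t] by simp
  qed simp
qed

end
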